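(* Let $\alpha:I\to\mathbb{E}^3$ ($I\subset\mathbb{R}$ an open interval) be a smooth space curve parametrized by arclength $s$ with curvature $\kappa\equiv 1$. Then the tangent indicatrix $T=\alpha'$ of $\alpha$ is a spherical helix if and only if $\det(\alpha^{(3)}(s),\alpha^{(4)}(s),\alpha^{(5)}(s))=0$ for all $s\in I$.
   Context: $\alpha^{(k)}$ denotes the $k$-th derivative of $\alpha$ with respect to arclength, and $\det(u,v,w)$ is the determinant of the $3\times 3$ matrix with columns $u,v,w$. $\{T,N,B\}$ is the Frenet frame of $\alpha$, with $T'=\kappa N$, $N'=-\kappa T+\tau B$, $B'=-\tau N$, where $\tau$ is the torsion. The tangent indicatrix is the curve $s\mapsto T(s)$ on the unit sphere; since $\kappa\equiv1$, $s$ is also an arclength parameter of $T$. A curve is a helix (curve of constant slope) if its unit tangent vector makes a constant angle with a fixed direction; a spherical helix is a helix lying on a sphere. *)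

theory Defs
  imports "HOL-Analysis.Analysis"
begin

fun nderiv :: "nat \<Rightarrow> (real \<Rightarrow> 'a::real_normed_vector) \<Rightarrow> real \<Rightarrow> 'a" where
  "nderiv 0 f = f"
| "nderiv (Suc k) f = (\<lambda>t. vector_derivative (nderiv k f) (at t))"

definition smooth_curve_on :: "real set \<Rightarrow> (real \<Rightarrow> 'a::real_normed_vector) \<Rightarrow> bool" where
  "smooth_curve_on I f \<longleftrightarrow> (\<forall>k. \<forall>t\<in>I. nderiv k f differentiable (at t))"

definition det3 :: "real^3 \<Rightarrow> real^3 \<Rightarrow> real^3 \<Rightarrow> real" where
  "det3 u v w = det (transpose (vector [u, v, w] :: real^3^3))"

definition vec_angle :: "real^3 \<Rightarrow> real^3 \<Rightarrow> real" where
  "vec_angle u v = arccos ((u \<bullet> v) / (norm u * norm v))"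

definition helix_on :: "real set \<Rightarrow> (real \<Rightarrow> real^3) \<Rightarrow> bool" where
  "helix_on I \<beta> \<longleftrightarrow>
     (\<forall>s\<in>I. vector_derivative \<beta> (at s) \<noteq> 0) \<and>
     (\<exists>u::real^3. u \<noteq> 0 \<and> (\<exists>\<theta>. \<forall>s\<in>I.
        vec_angle (vector_derivative \<beta> (at s) /\<^sub>R norm (vector_derivative \<beta> (at s))) u = \<theta>))"

definition on_sphere :: "real set \<Rightarrow> (real \<Rightarrow> real^3) \<Rightarrow> bool" where
  "on_sphere I \<beta> \<longleftrightarrow> (\<exists>c r. r > 0 \<and> (\<forall>s\<in>I. dist (\<beta> s) c = r))"

definition spherical_helix_on :: "real set \<Rightarrow> (real \<Rightarrow> real^3) \<Rightarrow> bool" where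
  "spherical_helix_on I \<beta> \<longleftrightarrow> helix_on I \<beta> \<and> on_sphere I \<beta>"

end

theory Submission
  imports Defs
begin

(* Write T = alpha', N = alpha'', X = alpha''', Y = alpha'''', Z = alpha'''''.
   Since |T| = 1, the tangent indicatrix T lies on the unit sphere and has unit speed |T'| = |N| = 1,
   so T is a spherical helix iff its unit tangent N has constant inner product with some fixed
   nonzero vector u.  Differentiating, N . u is constant iff X, Y, Z are all orthogonal to u.
   If so, X, Y, Z are coplanar and det(X, Y, Z) = 0.  Conversely, the unit relations
   |T| = |N| = 1 force T . X = -1 and T . Y = 0, hence X x Y never vanishes; if moreover
   det(X, Y, Z) = 0 then the derivative X x Z of n = X x Y is parallel to n, so n has constant
   direction u, and X . u = 0 gives that N . u is constant. *)

unbundle cross3_syntax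

lemma has_real_derivative_inner:
  assumes "(f has_vector_derivative f') (at s)" "(g has_vector_derivative g') (at s)"
  shows "((\<lambda>s. f s \<bullet> g s) has_real_derivative (f s \<bullet> g' + f' \<bullet> g s)) (at s)"
  using bounded_bilinear.has_vector_derivative[OF bounded_bilinear_inner assms]
  by (simp add: has_real_derivative_iff_has_vector_derivative)

lemma has_vector_derivative_cross:
  assumes "(f has_vector_derivative f') (at s)" "(g has_vector_derivative g') (at s)"
  shows "((\<lambda>s. f s \<times> g s) has_vector_derivative (f s \<times> g' + f' \<times> g s)) (at s)"
proof -
  have "bounded_bilinear cross3"
    using bilinear_conv_bounded_bilinear bilinear_cross by blast
  from bounded_bilinear.has_vector_derivative[OF this assms] show ?thesis by simp
qed

lemma constant_inner_derivative:
  assumes "open I" "s \<in> I" "\<forall>t\<in>I. f t \<bullet> g t = c"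
    and "(f has_vector_derivative f') (at s)" "(g has_vector_derivative g') (at s)"
  shows "f s \<bullet> g' + f' \<bullet> g s = 0"
proof -
  have "((\<lambda>_. c) has_real_derivative (f s \<bullet> g' + f' \<bullet> g s)) (at s)"
    using has_field_derivative_transform_within_open[OF has_real_derivative_inner[OF assms(4,5)]
        assms(1,2)] assms(3) by auto
  then show ?thesis using DERIV_const DERIV_unique by blast
qed

lemma orthogonal_fixed_derivative:
  assumes "open I" "\<forall>t\<in>I. f t \<bullet> u = c"
    and "\<And>t. t \<in> I \<Longrightarrow> (f has_vector_derivative f' t) (at t)"
  shows "\<forall>t\<in>I. f' t \<bullet> u = 0"
  using constant_inner_derivative[OF assms(1) _ assms(2) assms(3) has_vector_derivative_const]
  by simp

lemma det3_cross: "det3 u v w = u \<bullet> (v \<times> w)"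
  by (simp add: det3_def det_transpose dot_cross_det)

lemma cross_eq_zero_parallel:
  fixes a b :: "real^3"
  assumes "a \<times> b = 0" "a \<noteq> 0"
  shows "b = ((a \<bullet> b) / (a \<bullet> a)) *\<^sub>R a"
proof -
  have "(a \<bullet> a) *\<^sub>R b = (a \<bullet> b) *\<^sub>R a"
    using Lagrange[of a a b] assms(1) by simp
  moreover have "b = inverse (a \<bullet> a) *\<^sub>R ((a \<bullet> a) *\<^sub>R b)" using assms(2) by simp
  ultimately show ?thesis by (simp add: divide_inverse_commute)
qed

lemma orthogonal_common_det3:
  fixes u X Y Z :: "real^3"
  assumes "u \<noteq> 0" "X \<bullet> u = 0" "Y \<bullet> u = 0" "Z \<bullet> u = 0"
  shows "det3 X Y Z = 0"
proof -
  have "u \<times> (Y \<times> Z) = 0" using assms by (simp add: Lagrange inner_commute)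
  then have "Y \<times> Z = ((u \<bullet> (Y \<times> Z)) / (u \<bullet> u)) *\<^sub>R u"
    using cross_eq_zero_parallel assms(1) by blast
  then show ?thesis using assms(2) by (metis det3_cross inner_scaleR_right mult_zero_right)
qed

lemma parallel_derivative_constant_direction:
  fixes n :: "real \<Rightarrow> 'a::real_inner"
  assumes "convex I"
    and "\<And>s. s \<in> I \<Longrightarrow> (n has_vector_derivative b s *\<^sub>R n s) (at s)"
    and "\<And>s. s \<in> I \<Longrightarrow> n s \<noteq> 0"
  shows "\<exists>u. \<forall>s\<in>I. sgn (n s) = u"
proof -
  define v where "v t = inverse (norm (n t)) *\<^sub>R n t" for t
  have "(v has_vector_derivative 0) (at s within I)" if s: "s \<in> I" for s
  proof -
    have dn: "(n has_vector_derivative b s *\<^sub>R n s) (at s)" and nz: "n s \<noteq> 0"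
      using assms(2,3) s by auto
    have "((\<lambda>t. norm (n t)) has_derivative (\<lambda>h. (h *\<^sub>R b s *\<^sub>R n s) \<bullet> sgn (n s))) (at s)"
      using has_derivative_compose[OF dn[unfolded has_vector_derivative_def]
          has_derivative_norm[OF nz]] by (simp add: o_def)
    moreover have "(\<lambda>h. (h *\<^sub>R b s *\<^sub>R n s) \<bullet> sgn (n s)) = (\<lambda>h. (b s * norm (n s)) * h)"
      using nz by (auto simp: sgn_div_norm dot_square_norm power2_eq_square)
    ultimately have dnorm: "((\<lambda>t. norm (n t)) has_real_derivative b s * norm (n s)) (at s)"
      unfolding has_field_derivative_def by simp
    have "(v has_vector_derivative
        inverse (norm (n s)) *\<^sub>R b s *\<^sub>R n s
        + (- (b s * norm (n s) * inverse (norm (n s) ^ Suc (Suc 0)))) *\<^sub>R n s) (at s)"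
      unfolding v_def by (rule has_vector_derivative_scaleR[OF DERIV_inverse_fun[OF dnorm] dn])
        (use nz in simp)
    moreover have "inverse (norm (n s)) *\<^sub>R b s *\<^sub>R n s
        + (- (b s * norm (n s) * inverse (norm (n s) ^ Suc (Suc 0)))) *\<^sub>R n s = 0"
      using nz by (simp add: power2_eq_square field_simps)
    ultimately show ?thesis by (metis has_vector_derivative_at_within)
  qed
  then obtain u where "\<And>s. s \<in> I \<Longrightarrow> v s = u"
    using has_vector_derivative_zero_constant[OF assms(1)] by blast
  then show ?thesis by (auto simp: v_def sgn_div_norm)
qed

lemma spherical_helix_unit_speed_iff:
  fixes T N :: "real \<Rightarrow> real^3"
  assumes "\<forall>s\<in>I. norm (T s) = 1" "\<forall>s\<in>I. norm (N s) = 1"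
    and "\<forall>s\<in>I. vector_derivative T (at s) = N s"
  shows "spherical_helix_on I T \<longleftrightarrow> (\<exists>u. u \<noteq> 0 \<and> (\<exists>c. \<forall>s\<in>I. N s \<bullet> u = c))"
proof -
  have sphere: "on_sphere I T"
    unfolding on_sphere_def using assms(1) by (intro exI[of _ 0] exI[of _ 1]) (simp add: dist_norm)
  have "N s \<noteq> 0" and "vec_angle (N s /\<^sub>R norm (N s)) u = arccos (N s \<bullet> u / norm u)"
    if "s \<in> I" for s u
    using assms(2) that by (auto simp: vec_angle_def)
  then have "helix_on I T \<longleftrightarrow> (\<exists>u. u \<noteq> 0 \<and> (\<exists>\<theta>. \<forall>s\<in>I. arccos (N s \<bullet> u / norm u) = \<theta>))"
    using assms(3) unfolding helix_on_def by (simp cong: ball_cong)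
  also have "\<dots> \<longleftrightarrow> (\<exists>u. u \<noteq> 0 \<and> (\<exists>c. \<forall>s\<in>I. N s \<bullet> u = c))"
  proof (rule ex_cong1, rule conj_cong, rule refl)
    fix u :: "real^3" assume u: "u \<noteq> 0"
    show "(\<exists>\<theta>. \<forall>s\<in>I. arccos (N s \<bullet> u / norm u) = \<theta>) \<longleftrightarrow> (\<exists>c. \<forall>s\<in>I. N s \<bullet> u = c)"
    proof
      assume "\<exists>\<theta>. \<forall>s\<in>I. arccos (N s \<bullet> u / norm u) = \<theta>"
      then obtain \<theta> where \<theta>: "\<forall>s\<in>I. arccos (N s \<bullet> u / norm u) = \<theta>" by blast
      have "N s \<bullet> u = norm u * cos \<theta>" if s: "s \<in> I" for s
      proof -
        have "\<bar>N s \<bullet> u / norm u\<bar> \<le> 1"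
          using Cauchy_Schwarz_ineq2[of "N s" u] assms(2) s u by (simp add: abs_divide)
        then have "cos (arccos (N s \<bullet> u / norm u)) = N s \<bullet> u / norm u" by (rule cos_arccos_abs)
        then show ?thesis using \<theta> s u by simp
      qed
      then show "\<exists>c. \<forall>s\<in>I. N s \<bullet> u = c" by blast
    qed auto
  qed
  finally show ?thesis using sphere by (simp add: spherical_helix_on_def)
qed

text \<open>For a unit-speed curve T with unit derivative N, the cross product of N' and N'' never
  vanishes: differentiating the unit relations gives T . N' = -1 and T . N'' = 0.\<close>
lemma unit_frame_cross_nonzero:
  fixes T N X Y :: "real \<Rightarrow> real^3"
  assumes "open I" "\<forall>s\<in>I. norm (T s) = 1" "\<forall>s\<in>I. norm (N s) = 1"
    and dT: "\<And>s. s \<in> I \<Longrightarrow> (T has_vector_derivative N s) (at s)"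
    and dN: "\<And>s. s \<in> I \<Longrightarrow> (N has_vector_derivative X s) (at s)"
    and dX: "\<And>s. s \<in> I \<Longrightarrow> (X has_vector_derivative Y s) (at s)"
    and "s \<in> I"
  shows "X s \<times> Y s \<noteq> 0"
proof -
  note const = constant_inner_derivative[OF assms(1)]
  have TT: "\<forall>t\<in>I. T t \<bullet> T t = 1" and NN: "\<forall>t\<in>I. N t \<bullet> N t = 1"
    using assms(2,3) by (simp_all add: dot_square_norm)
  have TN: "\<forall>t\<in>I. T t \<bullet> N t = 0"
  proof
    fix t assume t: "t \<in> I"
    from const[OF t TT dT[OF t] dT[OF t]] show "T t \<bullet> N t = 0" by (simp add: inner_commute)
  qed
  have NX: "\<forall>t\<in>I. N t \<bullet> X t = 0"
  proof
    fix t assume t: "t \<in> I"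
    from const[OF t NN dN[OF t] dN[OF t]] show "N t \<bullet> X t = 0" by (simp add: inner_commute)
  qed
  have TX: "\<forall>t\<in>I. T t \<bullet> X t = -1"
  proof
    fix t assume t: "t \<in> I"
    from const[OF t TN dT[OF t] dN[OF t]] NN t show "T t \<bullet> X t = -1" by auto
  qed
  have NY: "N s \<bullet> Y s = - (X s \<bullet> X s)"
    using const[OF assms(7) NX dN[OF assms(7)] dX[OF assms(7)]] by simp
  have TY: "T s \<bullet> Y s = 0"
    using const[OF assms(7) TX dT[OF assms(7)] dX[OF assms(7)]] NX assms(7) by simp
  show ?thesis
  proof
    assume "X s \<times> Y s = 0"
    then have "Y s = 0" using Lagrange[of "T s" "X s" "Y s"] TX TY assms(7) by simp
    then have "X s = 0" using NY by simp
    then show False using TX assms(7) by force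
  qed
qed

lemma constant_component_iff_det3:
  fixes N X Y Z :: "real \<Rightarrow> real^3"
  assumes "open I" "convex I" "I \<noteq> {}"
    and dN: "\<And>s. s \<in> I \<Longrightarrow> (N has_vector_derivative X s) (at s)"
    and dX: "\<And>s. s \<in> I \<Longrightarrow> (X has_vector_derivative Y s) (at s)"
    and dY: "\<And>s. s \<in> I \<Longrightarrow> (Y has_vector_derivative Z s) (at s)"
    and XY: "\<And>s. s \<in> I \<Longrightarrow> X s \<times> Y s \<noteq> 0"
  shows "(\<exists>u. u \<noteq> 0 \<and> (\<exists>c. \<forall>s\<in>I. N s \<bullet> u = c)) \<longleftrightarrow> (\<forall>s\<in>I. det3 (X s) (Y s) (Z s) = 0)"
proof
  assume "\<exists>u. u \<noteq> 0 \<and> (\<exists>c. \<forall>s\<in>I. N s \<bullet> u = c)"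
  then obtain u c where u: "u \<noteq> 0" and "\<forall>s\<in>I. N s \<bullet> u = c" by blast
  then have Xu: "\<forall>s\<in>I. X s \<bullet> u = 0" using orthogonal_fixed_derivative[OF assms(1) _ dN] by blast
  then have Yu: "\<forall>s\<in>I. Y s \<bullet> u = 0" using orthogonal_fixed_derivative[OF assms(1) _ dX] by blast
  then have Zu: "\<forall>s\<in>I. Z s \<bullet> u = 0" using orthogonal_fixed_derivative[OF assms(1) _ dY] by blast
  show "\<forall>s\<in>I. det3 (X s) (Y s) (Z s) = 0"
    using Xu Yu Zu orthogonal_common_det3[OF u] by blast
next
  assume det: "\<forall>s\<in>I. det3 (X s) (Y s) (Z s) = 0"
  define n where "n s = X s \<times> Y s" for s
  have nz: "n s \<noteq> 0" if "s \<in> I" for s using XY[OF that] by (simp add: n_def)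
  text \<open>The normal n of the plane spanned by X and Y has derivative X x Z, parallel to n by det = 0.\<close>
  have dn: "(n has_vector_derivative ((n s \<bullet> (X s \<times> Z s)) / (n s \<bullet> n s)) *\<^sub>R n s) (at s)"
    if s: "s \<in> I" for s
  proof -
    have "n s \<bullet> X s = 0" by (simp add: n_def dot_cross_self)
    moreover have "n s \<bullet> Z s = 0"
      using det s by (metis n_def cross_triple det3_cross inner_commute)
    ultimately have "n s \<times> (X s \<times> Z s) = 0" by (simp add: Lagrange)
    then have "X s \<times> Z s = ((n s \<bullet> (X s \<times> Z s)) / (n s \<bullet> n s)) *\<^sub>R n s"
      using nz[OF s] by (rule cross_eq_zero_parallel)
    moreover have "(n has_vector_derivative X s \<times> Z s) (at s)"
      using has_vector_derivative_cross[OF dX[OF s] dY[OF s]] by (simp add: n_def[abs_def])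
    ultimately show ?thesis by simp
  qed
  then obtain u where u: "\<And>s. s \<in> I \<Longrightarrow> sgn (n s) = u"
    using parallel_derivative_constant_direction[OF assms(2) dn nz] by blast
  obtain s0 where "s0 \<in> I" using assms(3) by blast
  then have "u \<noteq> 0" using u nz by (metis sgn_zero_iff)
  moreover have Xu: "X s \<bullet> u = 0" if "s \<in> I" for s
    using u[OF that, symmetric] by (simp add: n_def sgn_div_norm inner_commute dot_cross_self)
  have "((\<lambda>s. N s \<bullet> u) has_real_derivative 0) (at s)" if "s \<in> I" for s
    using has_real_derivative_inner[OF dN[OF that] has_vector_derivative_const[of u]] Xu[OF that] by simp
  then have "\<exists>c. \<forall>s\<in>I. N s \<bullet> u = c"
    using has_field_derivative_zero_constant[OF assms(2)] by (meson has_field_derivative_at_within)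
  ultimately show "\<exists>u. u \<noteq> 0 \<and> (\<exists>c. \<forall>s\<in>I. N s \<bullet> u = c)" by blast
qed

lemma smooth_curve_nderiv:
  assumes "smooth_curve_on I f" "s \<in> I"
  shows "(nderiv k f has_vector_derivative nderiv (Suc k) f s) (at s)"
  using assms unfolding smooth_curve_on_def by (simp add: vector_derivative_works[symmetric])

theorem theorem1:
  fixes \<alpha> :: "real \<Rightarrow> real^3" and I :: "real set"
  assumes "open I" and "is_interval I" and "I \<noteq> {}"
    and "smooth_curve_on I \<alpha>"
    and "\<forall>s\<in>I. norm (nderiv 1 \<alpha> s) = 1"
    and "\<forall>s\<in>I. norm (nderiv 2 \<alpha> s) = 1"
  shows "spherical_helix_on I (nderiv 1 \<alpha>) \<longleftrightarrow>
         (\<forall>s\<in>I. det3 (nderiv 3 \<alpha> s) (nderiv 4 \<alpha> s) (nderiv 5 \<alpha> s) = 0)"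
proof -
  have succ: "Suc 1 = 2" "Suc 2 = 3" "Suc 3 = 4" "Suc 4 = 5" by simp_all
  note d = smooth_curve_nderiv[OF assms(4), of _ 1] smooth_curve_nderiv[OF assms(4), of _ 2]
    smooth_curve_nderiv[OF assms(4), of _ 3] smooth_curve_nderiv[OF assms(4), of _ 4]
  note d = d[unfolded succ]
  have "\<forall>s\<in>I. vector_derivative (nderiv 1 \<alpha>) (at s) = nderiv 2 \<alpha> s"
    by (simp add: numeral_2_eq_2)
  then have "spherical_helix_on I (nderiv 1 \<alpha>) \<longleftrightarrow>
      (\<exists>u. u \<noteq> 0 \<and> (\<exists>c. \<forall>s\<in>I. nderiv 2 \<alpha> s \<bullet> u = c))"
    using spherical_helix_unit_speed_iff assms(5,6) by blast
  also have "\<dots> \<longleftrightarrow> (\<forall>s\<in>I. det3 (nderiv 3 \<alpha> s) (nderiv 4 \<alpha> s) (nderiv 5 \<alpha> s) = 0)"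
    using constant_component_iff_det3[OF assms(1) is_interval_convex[OF assms(2)] assms(3) d(2-4)
        unit_frame_cross_nonzero[OF assms(1,5,6) d(1-3)]] .
  finally show ?thesis .
qed

end
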